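(* Let $(A,B,R)$ be a normalized formal context and $(X,Y)\in\mathcal{C}_N$. If $X^{\uparrow}\neq\varnothing$, then $X^{\uparrow\downarrow}=X$, i.e. $\langle X,X^{\uparrow}\rangle$ is a formal concept of $(A,B,R)$.
   Context: A formal context is a triple $(A,B,R)$ with $R\subseteq A\times B$. Derivation operators: $X^{\uparrow}=\{a\in A\mid (a,b)\in R \text{ for all } b\in X\}$ for $X\subseteq B$ and $Y^{\downarrow}=\{b\in B\mid (a,b)\in R \text{ for all } a\in Y\}$ for $Y\subseteq A$; a formal concept is a pair $\langle X,Y\rangle$ with $X^\uparrow=Y$, $Y^\downarrow=X$. Necessity operators: $X^{\uparrow_N}=\{a\in A\mid \text{for all } b\in B,\ (a,b)\in R\Rightarrow b\in X\}$ and $Y^{\downarrow^N}=\{b\in B\mid \text{for all } a\in A,\ (a,b)\in R\Rightarrow a\in Y\}$. $\mathcal{C}_N=\{(X,Y)\mid X\subseteq B,\ Y\subseteq A,\ X^{\uparrow_N}=Y,\ Y^{\downarrow^N}=X\}$. The context is normalized if for every $a\in A$ there are $b,b'\in B$ with $(a,b)\in R$, $(a,b')\notin R$, and for every $b\in B$ there are $a,a'\in A$ with $(a,b)\in R$, $(a',b)\notin R$. *)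

theory Defs
  imports Main
begin

definition fc_up :: "'a set \<Rightarrow> ('a \<times> 'b) set \<Rightarrow> 'b set \<Rightarrow> 'a set" where
  "fc_up A R X = {a \<in> A. \<forall>b \<in> X. (a, b) \<in> R}"

definition fc_down :: "'b set \<Rightarrow> ('a \<times> 'b) set \<Rightarrow> 'a set \<Rightarrow> 'b set" where
  "fc_down B R Y = {b \<in> B. \<forall>a \<in> Y. (a, b) \<in> R}"

definition nec_up :: "'a set \<Rightarrow> 'b set \<Rightarrow> ('a \<times> 'b) set \<Rightarrow> 'b set \<Rightarrow> 'a set" where
  "nec_up A B R X = {a \<in> A. \<forall>b \<in> B. (a, b) \<in> R \<longrightarrow> b \<in> X}"

definition nec_down :: "'a set \<Rightarrow> 'b set \<Rightarrow> ('a \<times> 'b) set \<Rightarrow> 'a set \<Rightarrow> 'b set" where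
  "nec_down A B R Y = {b \<in> B. \<forall>a \<in> A. (a, b) \<in> R \<longrightarrow> a \<in> Y}"

definition C_N :: "'a set \<Rightarrow> 'b set \<Rightarrow> ('a \<times> 'b) set \<Rightarrow> ('b set \<times> 'a set) set" where
  "C_N A B R = {(X, Y). X \<subseteq> B \<and> Y \<subseteq> A \<and> nec_up A B R X = Y \<and> nec_down A B R Y = X}"

definition normalized :: "'a set \<Rightarrow> 'b set \<Rightarrow> ('a \<times> 'b) set \<Rightarrow> bool" where
  "normalized A B R \<longleftrightarrow>
     (\<forall>a \<in> A. \<exists>b \<in> B. \<exists>b' \<in> B. (a, b) \<in> R \<and> (a, b') \<notin> R) \<and>
     (\<forall>b \<in> B. \<exists>a \<in> A. \<exists>a' \<in> A. (a, b) \<in> R \<and> (a', b) \<notin> R)"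

definition formal_concept :: "'a set \<Rightarrow> 'b set \<Rightarrow> ('a \<times> 'b) set \<Rightarrow> 'b set \<Rightarrow> 'a set \<Rightarrow> bool" where
  "formal_concept A B R X Y \<longleftrightarrow> fc_up A R X = Y \<and> fc_down B R Y = X"

end

theory Submission
  imports Defs
begin

text \<open>
  The inclusion \<open>X \<subseteq> X\<^sup>\<up>\<^sup>\<down>\<close> holds for any Galois closure, so only the converse needs proof.
  If \<open>X = {}\<close> then \<open>X\<^sup>\<up> = A\<close>, and in a normalized context no attribute is shared by all
  objects. Otherwise every \<open>a \<in> X\<^sup>\<up>\<close> is related to some attribute of \<open>X = Y\<^sup>\<down>\<^sup>N\<close>, so
  \<open>a \<in> Y = X\<^sup>\<up>\<^sup>N\<close>: all attributes of \<open>a\<close> lie in \<open>X\<close>. Such an \<open>a\<close> exists as \<open>X\<^sup>\<up> \<noteq> {}\<close>,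
  and every attribute in \<open>X\<^sup>\<up>\<^sup>\<down>\<close> is an attribute of \<open>a\<close>.
\<close>

lemma fc_down_fc_up_extensive:
  assumes "X \<subseteq> B"
  shows "X \<subseteq> fc_down B R (fc_up A R X)"
  using assms unfolding fc_down_def fc_up_def by auto

lemma fc_up_empty: "fc_up A R {} = A"
  unfolding fc_up_def by auto

lemma normalized_fc_down_carrier:
  assumes "normalized A B R"
  shows "fc_down B R A = {}"
  using assms unfolding normalized_def fc_down_def by blast

lemma fc_up_subset_if_subset_nec_down:
  assumes "X \<noteq> {}" and "X \<subseteq> nec_down A B R Y"
  shows "fc_up A R X \<subseteq> Y"
proof
  fix a assume "a \<in> fc_up A R X"
  then have "a \<in> A" and related: "\<forall>b \<in> X. (a, b) \<in> R"
    unfolding fc_up_def by auto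
  obtain b where "b \<in> X" using assms(1) by auto
  with related have "(a, b) \<in> R" by blast
  with \<open>a \<in> A\<close> \<open>b \<in> X\<close> assms(2) show "a \<in> Y"
    unfolding nec_down_def by blast
qed

lemma fc_down_fc_up_subset_if_nec_up:
  assumes "a \<in> fc_up A R X" and "a \<in> nec_up A B R X"
  shows "fc_down B R (fc_up A R X) \<subseteq> X"
proof
  fix b assume "b \<in> fc_down B R (fc_up A R X)"
  with assms(1) have "b \<in> B" and "(a, b) \<in> R"
    unfolding fc_down_def by auto
  with assms(2) show "b \<in> X"
    unfolding nec_up_def by blast
qed

theorem mainTheorem5:
  fixes A :: "'a set" and B :: "'b set" and R :: "('a \<times> 'b) set"
    and X :: "'b set" and Y :: "'a set"
  assumes "R \<subseteq> A \<times> B"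
    and "normalized A B R"
    and "(X, Y) \<in> C_N A B R"
    and "fc_up A R X \<noteq> {}"
  shows "fc_down B R (fc_up A R X) = X \<and> formal_concept A B R X (fc_up A R X)"
proof -
  have "X \<subseteq> B" and Y_eq: "Y = nec_up A B R X" and X_eq: "X = nec_down A B R Y"
    using assms(3) unfolding C_N_def by auto
  have "fc_down B R (fc_up A R X) \<subseteq> X"
  proof (cases "X = {}")
    case True
    then show ?thesis using normalized_fc_down_carrier[OF assms(2)] by (simp add: fc_up_empty)
  next
    case False
    obtain a where a: "a \<in> fc_up A R X" using assms(4) by auto
    have "fc_up A R X \<subseteq> Y"
      using fc_up_subset_if_subset_nec_down[of X A B R Y] False X_eq by simp
    with a Y_eq have "a \<in> nec_up A B R X" by blast
    with a show ?thesis by (rule fc_down_fc_up_subset_if_nec_up)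
  qed
  with fc_down_fc_up_extensive[OF \<open>X \<subseteq> B\<close>]
  have "fc_down B R (fc_up A R X) = X" by blast
  then show ?thesis unfolding formal_concept_def by simp
qed

end
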